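(* Let $r$ be a positive integer and let $M\in\{0,1\}^{n\times n}$ with $\operatorname{rank}(M)\leq r$ and $p(M)\leq\frac{1}{8r}$. Then $z(M)\geq n/4$.
   Context: $p(M)=|M|/n^2$, where $|M|$ is the number of $1$ entries. $z(M)$ is the largest $z$ for which there exist $X,Y\subset[n]$ with $|X|=|Y|=z$ such that the submatrix $M[X\times Y]$ (rows $X$, columns $Y$) has only $0$ entries. *)

theory Defs
  imports "HOL-Analysis.Analysis"
begin

definition density :: "real^'n^'n \<Rightarrow> real" where
  "density M = real (card {(i, j). M $ i $ j = 1}) / (real CARD('n))^2"

definition zrect :: "real^'n^'n \<Rightarrow> nat" where
  "zrect M = Max {z. \<exists>X Y. card X = z \<and> card Y = z \<and> (\<forall>i\<in>X. \<forall>j\<in>Y. M $ i $ j = 0)}"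

end

theory Submission
  imports Defs
begin

text \<open>Call a row light if it has at most \<open>t = n/(4r)\<close> ones. By Markov's inequality the density
  bound leaves at most \<open>n/2\<close> heavy rows. The light rows span a space of dimension at most \<open>r\<close>,
  so at most \<open>r\<close> of them form a basis of that span; their supports cover at most \<open>r t = n/4\<close>
  columns, outside of which every light row vanishes. This gives an all-zero submatrix with
  at least \<open>n/2\<close> rows and \<open>3n/4\<close> columns.\<close>

lemma card_above_threshold_mult_le_sum:
  fixes f :: "'a \<Rightarrow> 'b::linordered_semidom"
  assumes "finite A" and "\<forall>x\<in>A. 0 \<le> f x"
  shows "of_nat (card {x\<in>A. t < f x}) * t \<le> sum f A"
proof -
  have "of_nat (card {x\<in>A. t < f x}) * t = (\<Sum>x\<in>{x\<in>A. t < f x}. t)"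
    by simp
  also have "\<dots> \<le> (\<Sum>x\<in>{x\<in>A. t < f x}. f x)"
    by (rule sum_mono) (simp add: less_imp_le)
  also have "\<dots> \<le> sum f A"
    using assms by (intro sum_mono2) auto
  finally show ?thesis .
qed

lemma density_eq_sum_row_ones:
  "density M = (\<Sum>i\<in>UNIV. real (card {j. M $ i $ j = 1})) / real CARD('n)^2"
  for M :: "real^'n^'n"
proof -
  have "{(i, j). M $ i $ j = 1} = (SIGMA i:UNIV. {j. M $ i $ j = 1})"
    by auto
  then show ?thesis
    unfolding density_def by simp
qed

lemma card_heavy_rows:
  fixes M :: "real^'n^'n"
  shows "real (card {i. t < real (card {j. M $ i $ j = 1})}) * t \<le> density M * real CARD('n)^2"
  using card_above_threshold_mult_le_sum[of UNIV "\<lambda>i. real (card {j. M $ i $ j = 1})" t]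
  by (simp add: density_eq_sum_row_ones)

lemma dim_rows_subset_le_rank:
  fixes M :: "real^'n^'m"
  shows "dim ((\<lambda>i. M $ i) ` I) \<le> rank M"
  unfolding row_rank_def
  by (rule dim_subset) (auto simp: rows_def row_def)

lemma subspace_vanishing_coords: "subspace {v::real^'n. \<forall>j\<in>Y. v $ j = 0}"
  unfolding subspace_def by auto

lemma common_support_card_le_dim:
  fixes S :: "(real^'n) set"
  assumes "\<forall>v\<in>S. real (card {j. v $ j \<noteq> 0}) \<le> t"
  obtains Z where "real (card Z) \<le> real (dim S) * t" and "\<forall>v\<in>S. \<forall>j. j \<notin> Z \<longrightarrow> v $ j = 0"
proof -
  obtain B where B: "B \<subseteq> S" "S \<subseteq> span B" "card B = dim S" and "finite B"
    using basis_exists[of S] finiteI_independent by metis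
  define Z where "Z = (\<Union>b\<in>B. {j. b $ j \<noteq> 0})"
  have "card Z \<le> (\<Sum>b\<in>B. card {j. b $ j \<noteq> 0})"
    unfolding Z_def using \<open>finite B\<close> by (rule card_UN_le)
  then have "real (card Z) \<le> (\<Sum>b\<in>B. real (card {j. b $ j \<noteq> 0}))"
    by (metis of_nat_le_iff of_nat_sum)
  also have "\<dots> \<le> (\<Sum>b\<in>B. t)"
    using assms B(1) by (intro sum_mono) auto
  also have "\<dots> = real (dim S) * t"
    using B(3) by simp
  finally have "real (card Z) \<le> real (dim S) * t" .
  moreover have "span B \<subseteq> {v. \<forall>j\<in>-Z. v $ j = 0}"
    by (rule span_minimal[OF _ subspace_vanishing_coords]) (auto simp: Z_def)
  then have "\<forall>v\<in>S. \<forall>j. j \<notin> Z \<longrightarrow> v $ j = 0"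
    using B(2) by blast
  ultimately show ?thesis
    using that by blast
qed

lemma zrect_ge_min_card:
  fixes M :: "real^'n^'n"
  assumes "\<forall>i\<in>X. \<forall>j\<in>Y. M $ i $ j = 0"
  shows "min (card X) (card Y) \<le> zrect M"
proof -
  let ?Z = "{z. \<exists>X Y. card X = z \<and> card Y = z \<and> (\<forall>i\<in>X. \<forall>j\<in>Y. M $ i $ j = 0)}"
  have "?Z \<subseteq> {..CARD('n)}"
    using card_mono[OF finite subset_UNIV] by (auto simp: card_UNIV)
  then have "finite ?Z"
    using finite_subset by blast
  obtain X' where "X' \<subseteq> X" "card X' = min (card X) (card Y)"
    using obtain_subset_with_card_n[of _ X] by (metis min.cobounded1)
  moreover obtain Y' where "Y' \<subseteq> Y" "card Y' = min (card X) (card Y)"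
    using obtain_subset_with_card_n[of _ Y] by (metis min.cobounded2)
  ultimately have "min (card X) (card Y) \<in> ?Z"
    using assms by blast
  then show ?thesis
    unfolding zrect_def using \<open>finite ?Z\<close> by (rule Max_ge[rotated])
qed

lemma card_Compl_finite: "card (- A) = CARD('a) - card A" for A :: "'a::finite set"
  by (simp add: Compl_eq_Diff_UNIV card_Diff_subset)

theorem lemma4p1:
  fixes M :: "real^'n^'n" and r :: nat
  assumes "r > 0"
    and "\<forall>i j. M $ i $ j \<in> {0, 1}"
    and "rank M \<le> r"
    and "density M \<le> 1 / (8 * real r)"
  shows "real (zrect M) \<ge> real CARD('n) / 4"
proof -
  let ?n = "real CARD('n)"
  define t where "t = ?n / (4 * real r)"
  define L where "L = {i. real (card {j. M $ i $ j = 1}) \<le> t}"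
  have "t > 0"
    using assms(1) by (simp add: t_def)
  have "- L = {i. t < real (card {j. M $ i $ j = 1})}"
    by (auto simp: L_def)
  then have "real (card (- L)) * t \<le> density M * ?n^2"
    using card_heavy_rows[of t M] by simp
  also have "\<dots> \<le> 1 / (8 * real r) * ?n^2"
    using assms(4) by (rule mult_right_mono) simp
  also have "\<dots> = ?n / 2 * t"
    by (simp add: t_def power2_eq_square)
  finally have "real (card (- L)) \<le> ?n / 2"
    using \<open>t > 0\<close> by simp
  then have light_rows: "real (card L) \<ge> ?n / 2"
    using card_Compl_finite[of L] card_mono[of UNIV L] by (simp add: of_nat_diff)
  have "\<forall>v\<in>(\<lambda>i. M $ i) ` L. real (card {j. v $ j \<noteq> 0}) \<le> t"
  proof
    fix v assume "v \<in> (\<lambda>i. M $ i) ` L"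
    then obtain i where "i \<in> L" "v = M $ i" by blast
    moreover have "{j. M $ i $ j \<noteq> 0} = {j. M $ i $ j = 1}"
      using assms(2) by force
    ultimately show "real (card {j. v $ j \<noteq> 0}) \<le> t"
      by (simp add: L_def)
  qed
  then obtain Z where Z: "real (card Z) \<le> real (dim ((\<lambda>i. M $ i) ` L)) * t"
    and zero_outside_Z: "\<forall>i\<in>L. \<forall>j\<in>-Z. M $ i $ j = 0"
    by (rule common_support_card_le_dim) auto
  note Z
  also have "real (dim ((\<lambda>i. M $ i) ` L)) * t \<le> real r * t"
    using dim_rows_subset_le_rank[of M L] assms(3) \<open>t > 0\<close> by (intro mult_right_mono) auto
  also have "\<dots> = ?n / 4"
    using assms(1) by (simp add: t_def)
  finally have "real (card Z) \<le> ?n / 4" .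
  then have "real (card (- Z)) \<ge> ?n / 2"
    using card_Compl_finite[of Z] card_mono[of UNIV Z] by (simp add: of_nat_diff)
  moreover have "min (card L) (card (- Z)) \<le> zrect M"
    using zero_outside_Z by (rule zrect_ge_min_card)
  ultimately have "?n / 2 \<le> real (zrect M)"
    using light_rows by (metis min_def of_nat_mono order_trans)
  then show ?thesis
    by simp
qed

end
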